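(* Let $(X,d)$ be a complete metric space and let $G:X\times X\to X$ be a mapping such that (a) $G(x,x)=x$ for all $x\in X$, and (b) for $x,y\in X$, $G(x,y)=x$ implies $y=x$. Let $T:X\to P_{cl}(X)$ be a multivalued operator with $SFix(T)\neq\emptyset$ and let $T_G(x)=\{G(x,u):u\in T(x)\}$ be the admissible perturbation of $T$ corresponding to $G$. Suppose there exist $\alpha,\beta,\gamma\ge0$ with $\alpha+\beta+\gamma<1$ such that $$H(T_G(x),T_G(y))\le\alpha d(x,y)+\beta D(x,T_G(y))+\gamma D(y,T_G(x))\quad\text{for all }x,y\in X,$$ so that $SFix(T)=\{x^*\}$ for some $x^*$, and suppose moreover that (ii) there exists $l\in(0,1)$ with $H(T(x),\{x^*\})\le l\,H(T_G(x),\{x^*\})$ for all $x\in X$, and (iii) there exists $L>0$ with $D(x,T_G(x))\le L\,D(x,T(x))$ for all $x\in X$. Then the strict fixed point problem $T(x)=\{x\}$ has the Ostrowski stability property: $T$ has a unique strict fixed point $x^*$, and for every sequence $(v_n)_{n\in\mathbb N}\subset X$ with $D(v_{n+1},T(v_n))\to0$ we have $v_n\to x^*$.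
   Context: $P_{cl}(X)$ is the family of nonempty closed subsets of $X$; $SFix(T)=\{x:T(x)=\{x\}\}$. For nonempty $A,B\subseteq X$: $D(a,B)=\inf_{b\in B}d(a,b)$, $e(A,B)=\sup_{a\in A}D(a,B)$, $H(A,B)=\max\{e(A,B),e(B,A)\}$. *)

theory Defs
  imports "HOL-Analysis.Analysis"
begin

text \<open>D(a,B) = inf over b in B of d(a,b): the library's infdist (for nonempty B).\<close>

definition excess :: "'a::metric_space set \<Rightarrow> 'a set \<Rightarrow> ereal" where
  "excess A B = (SUP a\<in>A. ereal (infdist a B))"

definition Hdist :: "'a::metric_space set \<Rightarrow> 'a set \<Rightarrow> ereal" where
  "Hdist A B = max (excess A B) (excess B A)"

definition SFix :: "('a \<Rightarrow> 'a set) \<Rightarrow> 'a set" where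
  "SFix T = {x. T x = {x}}"

definition adm_pert :: "('a \<Rightarrow> 'a \<Rightarrow> 'a) \<Rightarrow> ('a \<Rightarrow> 'a set) \<Rightarrow> 'a \<Rightarrow> 'a set" where
  "adm_pert G T x = (\<lambda>u. G x u) ` T x"

end

theory Submission
  imports Defs
begin

text \<open>At a strict fixed point \<open>x\<^sup>*\<close> the perturbation \<open>T\<^sub>G\<close> is again \<open>{x\<^sup>*}\<close>, so the contraction
  condition with \<open>y = x\<^sup>*\<close> reads \<open>H(T\<^sub>G x, {x\<^sup>*}) \<le> (\<alpha> + \<beta>) d(x, x\<^sup>*) + \<gamma> D(x\<^sup>*, T\<^sub>G x)\<close>; since
  \<open>D(x\<^sup>*, T\<^sub>G x) \<le> H(T\<^sub>G x, {x\<^sup>*})\<close> this gives \<open>H(T\<^sub>G x, {x\<^sup>*}) \<le> (\<alpha> + \<beta>)/(1 - \<gamma>) d(x, x\<^sup>*)\<close>, and by (ii)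
  every point of \<open>T x\<close> lies within \<open>c d(x, x\<^sup>*)\<close> of \<open>x\<^sup>*\<close>, where \<open>c = l (\<alpha> + \<beta>)/(1 - \<gamma>) < 1\<close>.
  For an approximate orbit this yields \<open>d(v\<^sub>n\<^sub>+\<^sub>1, x\<^sup>*) \<le> c d(v\<^sub>n, x\<^sup>*) + D(v\<^sub>n\<^sub>+\<^sub>1, T v\<^sub>n)\<close>, and such
  a perturbed geometric recursion with vanishing perturbation tends to 0.\<close>

lemma LIMSEQ_zero_if_perturbed_contraction:
  fixes a \<epsilon> :: "nat \<Rightarrow> real" and c :: real
  assumes "0 \<le> c" "c < 1" and nonneg: "\<And>n. 0 \<le> a n"
    and rec: "\<And>n. a (Suc n) \<le> c * a n + \<epsilon> n" and "\<epsilon> \<longlonglongrightarrow> 0"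
  shows "a \<longlonglongrightarrow> 0"
proof (rule LIMSEQ_I)
  fix r :: real
  assume "0 < r"
  with assms(2) obtain N where N: "\<And>n. n \<ge> N \<Longrightarrow> norm (\<epsilon> n) < (1 - c) * r / 2"
    using LIMSEQ_D[OF \<open>\<epsilon> \<longlonglongrightarrow> 0\<close>, of "(1 - c) * r / 2"] by auto
  define b where "b n = max (a n - r / 2) 0" for n
  have b_step: "b (Suc n) \<le> c * b n" if "n \<ge> N" for n
  proof -
    have "a (Suc n) - r / 2 \<le> c * (a n - r / 2)"
      using rec[of n] N[OF that] by (simp add: algebra_simps)
    also have "\<dots> \<le> c * b n"
      unfolding b_def using \<open>0 \<le> c\<close> by (intro mult_left_mono) auto
    finally show ?thesis
      unfolding b_def using \<open>0 \<le> c\<close> by simp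
  qed
  have b_geometric: "b (N + m) \<le> c ^ m * b N" for m
  proof (induction m)
    case (Suc m)
    have "b (N + Suc m) \<le> c * b (N + m)" using b_step[of "N + m"] by simp
    also have "\<dots> \<le> c * (c ^ m * b N)" using Suc \<open>0 \<le> c\<close> by (intro mult_left_mono) auto
    finally show ?case by (simp add: algebra_simps)
  qed simp
  have "(\<lambda>m. c ^ m * b N) \<longlonglongrightarrow> 0"
    using assms(1,2) by (intro tendsto_mult_left_zero LIMSEQ_power_zero) auto
  with \<open>0 < r\<close> obtain M where M: "\<And>m. m \<ge> M \<Longrightarrow> norm (c ^ m * b N) < r / 2"
    using LIMSEQ_D[of _ 0 "r / 2"] by fastforce
  have "norm (a n - 0) < r" if "n \<ge> N + M" for n
  proof -
    obtain m where "n = N + m" "m \<ge> M" using \<open>n \<ge> N + M\<close> le_Suc_ex by force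
    then have "b n < r / 2" using b_geometric[of m] M[of m] by simp
    then show ?thesis using nonneg[of n] unfolding b_def by (simp add: max_def split: if_splits)
  qed
  then show "\<exists>n0. \<forall>n\<ge>n0. norm (a n - 0) < r" by blast
qed

lemma Hdist_singletons: "Hdist {x} {y} = ereal (dist x y)"
  unfolding Hdist_def excess_def by (simp add: dist_commute)

lemma infdist_le_Hdist_singleton: "ereal (infdist x A) \<le> Hdist A {x}"
  unfolding Hdist_def excess_def by simp

lemma dist_le_if_Hdist_singleton_le:
  assumes "Hdist A {x} \<le> ereal r" and "a \<in> A"
  shows "dist a x \<le> r"
proof -
  have "ereal (dist a x) \<le> excess A {x}"
    unfolding excess_def using \<open>a \<in> A\<close> by (auto intro: SUP_upper2)
  also have "\<dots> \<le> ereal r" using assms(1) unfolding Hdist_def by simp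
  finally show ?thesis by simp
qed

lemma Hdist_singleton_le_divide:
  assumes "0 \<le> \<gamma>" "\<gamma> < 1" and H: "Hdist A {z} \<le> ereal (p + \<gamma> * infdist z A)"
  shows "Hdist A {z} \<le> ereal (p / (1 - \<gamma>))"
proof -
  obtain h where h: "Hdist A {z} = ereal h"
    using H infdist_le_Hdist_singleton[of z A] by (cases "Hdist A {z}") auto
  have "infdist z A \<le> h" using infdist_le_Hdist_singleton[of z A] h by simp
  then have "\<gamma> * infdist z A \<le> \<gamma> * h" using \<open>0 \<le> \<gamma>\<close> by (rule mult_left_mono)
  then have "h \<le> p + \<gamma> * h" using H h by simp
  then have "h \<le> p / (1 - \<gamma>)" using \<open>\<gamma> < 1\<close> by (simp add: field_simps)
  then show ?thesis using h by simp
qed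

lemma dist_le_infdist_add:
  assumes "A \<noteq> {}" and "\<And>a. a \<in> A \<Longrightarrow> dist a x \<le> r"
  shows "dist y x \<le> infdist y A + r"
proof -
  have "dist y x - r \<le> infdist y A"
    unfolding infdist_notempty[OF \<open>A \<noteq> {}\<close>]
  proof (rule cINF_greatest[OF \<open>A \<noteq> {}\<close>])
    fix a assume "a \<in> A"
    then show "dist y x - r \<le> dist y a" using assms(2)[of a] dist_triangle[of y x a] by simp
  qed
  then show ?thesis by simp
qed

lemma approximate_orbit_tendsto:
  fixes T :: "'a::metric_space \<Rightarrow> 'a set"
  assumes "\<And>x. T x \<noteq> {}" and "0 \<le> c" "c < 1"
    and toward: "\<And>x u. u \<in> T x \<Longrightarrow> dist u z \<le> c * dist x z"
    and approx: "(\<lambda>n. infdist (v (Suc n)) (T (v n))) \<longlonglongrightarrow> 0"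
  shows "v \<longlonglongrightarrow> z"
proof -
  have "dist (v (Suc n)) z \<le> c * dist (v n) z + infdist (v (Suc n)) (T (v n))" for n
    using dist_le_infdist_add[of "T (v n)" z "c * dist (v n) z" "v (Suc n)"] assms(1) toward
    by (simp add: add.commute)
  then have "(\<lambda>n. dist (v n) z) \<longlonglongrightarrow> 0"
    using LIMSEQ_zero_if_perturbed_contraction[OF \<open>0 \<le> c\<close> \<open>c < 1\<close> _ _ approx] by simp
  then show ?thesis using tendsto_dist_iff by blast
qed

lemma adm_pert_SFix: "x \<in> SFix T \<Longrightarrow> adm_pert G T x = {G x x}"
  unfolding SFix_def adm_pert_def by simp

lemma SFix_unique_if_reich_contraction:
  assumes diag: "\<And>x. G x x = x" and "\<alpha> + \<beta> + \<gamma> < 1"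
    and contr: "\<And>x y. Hdist (adm_pert G T x) (adm_pert G T y)
        \<le> ereal (\<alpha> * dist x y + \<beta> * infdist x (adm_pert G T y) + \<gamma> * infdist y (adm_pert G T x))"
    and "x \<in> SFix T" "y \<in> SFix T"
  shows "x = y"
proof -
  have "dist x y \<le> (\<alpha> + \<beta> + \<gamma>) * dist x y"
    using contr[of x y] adm_pert_SFix[OF \<open>x \<in> SFix T\<close>] diag adm_pert_SFix[OF \<open>y \<in> SFix T\<close>] diag
    by (simp add: Hdist_singletons dist_commute algebra_simps)
  with \<open>\<alpha> + \<beta> + \<gamma> < 1\<close> have "dist x y \<le> 0"
    by (smt (verit) mult_le_cancel_right1 zero_le_dist)
  then show ?thesis by simp
qed

lemma Hdist_adm_pert_SFix_le:
  assumes diag: "\<And>x. G x x = x" and "xs \<in> SFix T" and "0 \<le> \<gamma>" "\<gamma> < 1"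
    and contr: "\<And>x y. Hdist (adm_pert G T x) (adm_pert G T y)
        \<le> ereal (\<alpha> * dist x y + \<beta> * infdist x (adm_pert G T y) + \<gamma> * infdist y (adm_pert G T x))"
  shows "Hdist (adm_pert G T x) {xs} \<le> ereal ((\<alpha> + \<beta>) / (1 - \<gamma>) * dist x xs)"
proof -
  have "Hdist (adm_pert G T x) {xs}
      \<le> ereal ((\<alpha> + \<beta>) * dist x xs + \<gamma> * infdist xs (adm_pert G T x))"
    using contr[of x xs] adm_pert_SFix[OF \<open>xs \<in> SFix T\<close>] diag by (simp add: algebra_simps)
  from Hdist_singleton_le_divide[OF \<open>0 \<le> \<gamma>\<close> \<open>\<gamma> < 1\<close> this] show ?thesis by simp
qed

theorem mainTheorem7:
  fixes G :: "'a::complete_space \<Rightarrow> 'a \<Rightarrow> 'a"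
    and T :: "'a \<Rightarrow> 'a set"
    and xs :: 'a
    and \<alpha> \<beta> \<gamma> l L :: real
  assumes G_diag: "\<And>x. G x x = x"
    and G_inj: "\<And>x y. G x y = x \<Longrightarrow> y = x"
    and T_cl: "\<And>x. T x \<noteq> {} \<and> closed (T x)"
    and xs_fix: "xs \<in> SFix T"
    and coeffs: "\<alpha> \<ge> 0" "\<beta> \<ge> 0" "\<gamma> \<ge> 0" "\<alpha> + \<beta> + \<gamma> < 1"
    and contr: "\<And>x y. Hdist (adm_pert G T x) (adm_pert G T y)
        \<le> ereal (\<alpha> * dist x y + \<beta> * infdist x (adm_pert G T y) + \<gamma> * infdist y (adm_pert G T x))"
    and l_ii: "0 < l" "l < 1" "\<And>x. Hdist (T x) {xs} \<le> ereal l * Hdist (adm_pert G T x) {xs}"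
    and L_iii: "L > 0" "\<And>x. infdist x (adm_pert G T x) \<le> L * infdist x (T x)"
  shows "SFix T = {xs} \<and>
    (\<forall>v :: nat \<Rightarrow> 'a. (\<lambda>n. infdist (v (Suc n)) (T (v n))) \<longlonglongrightarrow> 0 \<longrightarrow> v \<longlonglongrightarrow> xs)"
proof -
  have "SFix T = {xs}"
    using SFix_unique_if_reich_contraction[OF G_diag coeffs(4) contr] xs_fix by blast
  define k where "k = (\<alpha> + \<beta>) / (1 - \<gamma>)"
  have "0 \<le> k" "k < 1" using coeffs unfolding k_def by (auto simp: divide_less_eq)
  have "0 \<le> l * k" "l * k < 1"
    using \<open>0 \<le> k\<close> \<open>k < 1\<close> l_ii(1,2) mult_left_le_one_le[of k l] by auto
  have "Hdist (T x) {xs} \<le> ereal (l * k * dist x xs)" for x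
  proof -
    have "Hdist (T x) {xs} \<le> ereal l * Hdist (adm_pert G T x) {xs}" by (rule l_ii(3))
    also have "\<dots> \<le> ereal l * ereal (k * dist x xs)"
      unfolding k_def using Hdist_adm_pert_SFix_le[OF G_diag xs_fix coeffs(3) _ contr] coeffs l_ii(1)
      by (intro ereal_mult_left_mono) auto
    finally show ?thesis by (simp add: mult.assoc)
  qed
  then have "dist u xs \<le> l * k * dist x xs" if "u \<in> T x" for x u
    using dist_le_if_Hdist_singleton_le that by blast
  with approximate_orbit_tendsto[of T "l * k"] T_cl \<open>0 \<le> l * k\<close> \<open>l * k < 1\<close>
  show ?thesis using \<open>SFix T = {xs}\<close> by blast
qed

end
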